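(* Let $M$ be a smooth manifold of dimension $n$, $\phi$ an exact $1$-form on $M$, and $t\in\mathbb{R}$. On $\mathfrak{h}=\bigoplus_{q=0}^{n}\Lambda^qT^*M$ define, for $\alpha\in\Lambda^aT^*M$ and $\beta\in\Lambda^bT^*M$, $$[\alpha,\beta]_{t,\phi}=(-1)^a d(\alpha\wedge\beta)+\tfrac{a+b+2}{2}\,\alpha\wedge t\phi\wedge\beta .$$ This bracket satisfies super symmetry and the super Jacobi identity, so $(\mathfrak{h},[\cdot,\cdot]_{t,\phi})$ is a Lie superalgebra.
   Context: $\Lambda^qT^*M$ is the space of smooth $q$-forms; a $q$-form has degree $-q-1$. For homogeneous $P,Q,R$ of degrees $p',q',r'$: super symmetry is $[P,Q]=-(-1)^{p'q'}[Q,P]$ and the super Jacobi identity is $[P,[Q,R]]=[[P,Q],R]+(-1)^{p'q'}[Q,[P,R]]$. *)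

theory Defs
  imports Main "HOL-Analysis.Analysis"
begin

text \<open>Abstract model of the graded algebra of smooth differential forms
 \<open>\<Omega>(M) = \<Oplus>_{q=0}^n \<Lambda>^q T^*M\<close> of an n-dimensional smooth manifold M:
 an ambient real vector space 'a (the direct sum), the subspaces \<open>\<Omega> q\<close> of
 homogeneous q-forms, the wedge product and the exterior derivative d.\<close>

definition diff_forms ::
  "(nat \<Rightarrow> 'a::real_vector set) \<Rightarrow> ('a \<Rightarrow> 'a \<Rightarrow> 'a) \<Rightarrow> ('a \<Rightarrow> 'a) \<Rightarrow> nat \<Rightarrow> bool" where
  "diff_forms \<Omega> wedge d n \<longleftrightarrow>
     (\<forall>q. subspace (\<Omega> q)) \<and>
     (\<forall>q>n. \<Omega> q = {0}) \<and>
     (\<forall>x. linear (wedge x)) \<and> (\<forall>y. linear (\<lambda>x. wedge x y)) \<and>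
     (\<forall>p q x y. x \<in> \<Omega> p \<longrightarrow> y \<in> \<Omega> q \<longrightarrow> wedge x y \<in> \<Omega> (p + q)) \<and>
     (\<forall>x y z. wedge (wedge x y) z = wedge x (wedge y z)) \<and>
     (\<forall>p q x y. x \<in> \<Omega> p \<longrightarrow> y \<in> \<Omega> q \<longrightarrow>
        wedge y x = (-1::real) ^ (p * q) *\<^sub>R wedge x y) \<and>
     linear d \<and>
     (\<forall>q x. x \<in> \<Omega> q \<longrightarrow> d x \<in> \<Omega> (Suc q)) \<and>
     (\<forall>x. d (d x) = 0) \<and>
     (\<forall>p x y. x \<in> \<Omega> p \<longrightarrow>
        d (wedge x y) = wedge (d x) y + (-1::real) ^ p *\<^sub>R wedge x (d y))"

definition bracket ::
  "('a::real_vector \<Rightarrow> 'a \<Rightarrow> 'a) \<Rightarrow> ('a \<Rightarrow> 'a) \<Rightarrow> real \<Rightarrow> 'a \<Rightarrow> nat \<Rightarrow> 'a \<Rightarrow> nat \<Rightarrow> 'a \<Rightarrow> 'a" where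
  "bracket wedge d t \<phi> a \<alpha> b \<beta> =
     (-1::real) ^ a *\<^sub>R d (wedge \<alpha> \<beta>)
     + ((real a + real b + 2) / 2) *\<^sub>R wedge \<alpha> (wedge (t *\<^sub>R \<phi>) \<beta>)"

end

theory Submission
  imports Defs
begin

text \<open>For a closed 1-form \<open>\<phi>\<close> the twisted differential \<open>D\<^sub>s = d + s \<phi> \<wedge> _\<close>
  squares to zero for every real \<open>s\<close> (for \<open>\<phi> = df\<close> it is \<open>e^(-sf) d e^(sf)\<close>) and satisfies
  the Leibniz rule \<open>D\<^bsub>r+s\<^esub> (x \<wedge> y) = D\<^sub>r x \<wedge> y + (-1)^p x \<wedge> D\<^sub>s y\<close> for a p-form x.
  Giving a k-form the weight \<open>w k = (k + 1) / 2\<close>, the bracket is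
  \<open>[\<alpha>, \<beta>] = (-1)^a D\<^bsub>t (w a + w b)\<^esub> (\<alpha> \<wedge> \<beta>)\<close>, so super symmetry is graded
  commutativity of the wedge product. All three terms of the Jacobi identity are \<open>D\<^sub>s\<close> of
  something for the same \<open>s = t (w a + w b + w c)\<close>. By the Leibniz rule and
  \<open>D\<^sub>s D\<^sub>s (\<alpha> \<wedge> \<beta> \<wedge> \<gamma>) = 0\<close> each of them becomes a signed combination of
  \<open>D\<^sub>s (\<alpha> \<wedge> D\<^bsub>t w b\<^esub> \<beta> \<wedge> \<gamma>)\<close> and \<open>D\<^sub>s (\<alpha> \<wedge> \<beta> \<wedge> D\<^bsub>t w c\<^esub> \<gamma>)\<close>,
  and the signs agree.\<close>

locale diff_forms_algebra =
  fixes \<Omega> :: "nat \<Rightarrow> 'a::real_vector set"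
    and wedge :: "'a \<Rightarrow> 'a \<Rightarrow> 'a" (infixr "\<wedge>" 70)
    and d :: "'a \<Rightarrow> 'a" and n :: nat
  assumes diff_forms: "diff_forms \<Omega> (\<wedge>) d n"
begin

lemma subspace_forms: "subspace (\<Omega> q)"
  using diff_forms unfolding diff_forms_def by simp

lemma linear_wedge_right: "linear (\<lambda>y. x \<wedge> y)"
  using diff_forms unfolding diff_forms_def by blast

lemma linear_wedge_left: "linear (\<lambda>x. x \<wedge> y)"
  using diff_forms unfolding diff_forms_def by blast

lemma linear_d: "linear d"
  using diff_forms unfolding diff_forms_def by blast

lemma wedge_in: "x \<in> \<Omega> p \<Longrightarrow> y \<in> \<Omega> q \<Longrightarrow> x \<wedge> y \<in> \<Omega> (p + q)"
  using diff_forms unfolding diff_forms_def by blast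

lemma wedge_assoc [simp]: "(x \<wedge> y) \<wedge> z = x \<wedge> y \<wedge> z"
  using diff_forms unfolding diff_forms_def by blast

lemma wedge_commute: "x \<in> \<Omega> p \<Longrightarrow> y \<in> \<Omega> q \<Longrightarrow> y \<wedge> x = (-1) ^ (p * q) *\<^sub>R (x \<wedge> y)"
  using diff_forms unfolding diff_forms_def by blast

lemma d_in: "x \<in> \<Omega> q \<Longrightarrow> d x \<in> \<Omega> (Suc q)"
  using diff_forms unfolding diff_forms_def by blast

lemma d_d [simp]: "d (d x) = 0"
  using diff_forms unfolding diff_forms_def by blast

lemma d_wedge: "x \<in> \<Omega> p \<Longrightarrow> d (x \<wedge> y) = d x \<wedge> y + (-1) ^ p *\<^sub>R (x \<wedge> d y)"
  using diff_forms unfolding diff_forms_def by blast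

lemma wedge_linear_simps [simp]:
  "x \<wedge> (y + z) = x \<wedge> y + x \<wedge> z" "(x + y) \<wedge> z = x \<wedge> z + y \<wedge> z"
  "x \<wedge> (y - z) = x \<wedge> y - x \<wedge> z" "(x - y) \<wedge> z = x \<wedge> z - y \<wedge> z"
  "x \<wedge> (r *\<^sub>R y) = r *\<^sub>R (x \<wedge> y)" "(r *\<^sub>R x) \<wedge> y = r *\<^sub>R (x \<wedge> y)"
  "x \<wedge> - y = - (x \<wedge> y)" "(- x) \<wedge> y = - (x \<wedge> y)"
  "x \<wedge> 0 = 0" "0 \<wedge> y = 0"
  using linear_add[OF linear_wedge_right] linear_add[OF linear_wedge_left]
    linear_diff[OF linear_wedge_right] linear_diff[OF linear_wedge_left]
    linear_scale[OF linear_wedge_right] linear_scale[OF linear_wedge_left]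
    linear_neg[OF linear_wedge_right] linear_neg[OF linear_wedge_left]
    linear_0[OF linear_wedge_right] linear_0[OF linear_wedge_left]
  by auto

lemma d_linear_simps [simp]:
  "d (x + y) = d x + d y" "d (x - y) = d x - d y" "d (r *\<^sub>R x) = r *\<^sub>R d x"
  "d (- x) = - d x" "d 0 = 0"
  using linear_add[OF linear_d] linear_diff[OF linear_d] linear_scale[OF linear_d]
    linear_neg[OF linear_d] linear_0[OF linear_d]
  by auto

lemma wedge_left_commute:
  "x \<in> \<Omega> p \<Longrightarrow> y \<in> \<Omega> q \<Longrightarrow> y \<wedge> x \<wedge> z = (-1) ^ (p * q) *\<^sub>R (x \<wedge> y \<wedge> z)"
  by (metis wedge_assoc wedge_commute wedge_linear_simps(6))

lemma wedge_self_odd: "x \<in> \<Omega> p \<Longrightarrow> odd p \<Longrightarrow> x \<wedge> x \<wedge> z = 0"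
proof -
  assume "x \<in> \<Omega> p" "odd p"
  then have "x \<wedge> x = - (x \<wedge> x)"
    using wedge_commute[of x p x p] by simp
  then have "2 *\<^sub>R (x \<wedge> x) = 0"
    by (simp add: scaleR_2 eq_neg_iff_add_eq_0)
  then have "x \<wedge> x = 0"
    by simp
  then show ?thesis
    by (metis wedge_assoc wedge_linear_simps(10))
qed

end

text \<open>Minus half the degree \<open>-k-1\<close> of a k-form in the superalgebra.\<close>
definition form_weight :: "nat \<Rightarrow> real" where
  "form_weight k = (real k + 1) / 2"

lemma form_weight_bracket_degree: "form_weight (a + b + 1) = form_weight a + form_weight b"
  by (simp add: form_weight_def field_simps)

locale closed_one_form = diff_forms_algebra +
  fixes \<phi>
  assumes one_form: "\<phi> \<in> \<Omega> 1" and closed: "d \<phi> = 0"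
begin

definition twisted_d :: "real \<Rightarrow> 'a \<Rightarrow> 'a" where
  "twisted_d s x = d x + s *\<^sub>R (\<phi> \<wedge> x)"

lemma twisted_d_linear_simps [simp]:
  "twisted_d s (x + y) = twisted_d s x + twisted_d s y"
  "twisted_d s (x - y) = twisted_d s x - twisted_d s y"
  "twisted_d s (r *\<^sub>R x) = r *\<^sub>R twisted_d s x"
  "twisted_d s (- x) = - twisted_d s x"
  by (simp_all add: twisted_d_def algebra_simps)

lemma twisted_d_in: "x \<in> \<Omega> k \<Longrightarrow> twisted_d s x \<in> \<Omega> (Suc k)"
  unfolding twisted_d_def
  using wedge_in[OF one_form] d_in subspace_forms
  by (metis plus_1_eq_Suc subspace_add subspace_scale)

lemma twisted_d_twisted_d [simp]: "twisted_d s (twisted_d s x) = 0"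
proof -
  have "d (\<phi> \<wedge> x) = - (\<phi> \<wedge> d x)"
    using d_wedge[OF one_form] closed by simp
  moreover have "\<phi> \<wedge> \<phi> \<wedge> y = 0" for y
    using wedge_self_odd[OF one_form] by simp
  ultimately show ?thesis
    by (simp add: twisted_d_def)
qed

lemma twisted_d_wedge:
  assumes "x \<in> \<Omega> p"
  shows "twisted_d (r + s) (x \<wedge> y) = twisted_d r x \<wedge> y + (-1) ^ p *\<^sub>R (x \<wedge> twisted_d s y)"
proof -
  have "x \<wedge> \<phi> \<wedge> y = (-1) ^ p *\<^sub>R (\<phi> \<wedge> x \<wedge> y)"
    using wedge_left_commute[OF one_form assms] by simp
  then show ?thesis
    using d_wedge[OF assms] by (simp add: twisted_d_def algebra_simps)
qed

lemma bracket_eq_twisted_d: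
  assumes "\<alpha> \<in> \<Omega> a"
  shows "bracket (\<wedge>) d t \<phi> a \<alpha> b \<beta> = (-1) ^ a *\<^sub>R twisted_d (t * (form_weight a + form_weight b)) (\<alpha> \<wedge> \<beta>)"
proof -
  have "\<alpha> \<wedge> \<phi> \<wedge> \<beta> = (-1) ^ a *\<^sub>R (\<phi> \<wedge> \<alpha> \<wedge> \<beta>)"
    using wedge_left_commute[OF one_form assms] by simp
  then show ?thesis
    by (simp add: bracket_def twisted_d_def form_weight_def field_simps)
qed

lemma bracket_in:
  assumes "\<alpha> \<in> \<Omega> a" and "\<beta> \<in> \<Omega> b"
  shows "bracket (\<wedge>) d t \<phi> a \<alpha> b \<beta> \<in> \<Omega> (a + b + 1)"
  unfolding bracket_eq_twisted_d[OF assms(1)]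
  using twisted_d_in[OF wedge_in[OF assms]] subspace_forms
  by (simp add: subspace_scale)

lemma bracket_super_symmetric:
  assumes "\<alpha> \<in> \<Omega> a" and "\<beta> \<in> \<Omega> b"
  shows "bracket (\<wedge>) d t \<phi> a \<alpha> b \<beta>
    = - ((-1) ^ ((a + 1) * (b + 1)) *\<^sub>R bracket (\<wedge>) d t \<phi> b \<beta> a \<alpha>)"
proof -
  have "(-1::real) ^ a = - ((-1) ^ ((a + 1) * (b + 1)) * (-1) ^ b * (-1) ^ (a * b))"
    by (cases "even a"; cases "even b") simp_all
  then show ?thesis
    using wedge_commute[OF assms]
    by (simp add: bracket_eq_twisted_d assms add.commute)
qed

lemma bracket_bracket_right:
  assumes \<alpha>: "\<alpha> \<in> \<Omega> a" and \<beta>: "\<beta> \<in> \<Omega> b"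
  shows "bracket (\<wedge>) d t \<phi> a \<alpha> (b + c + 1) (bracket (\<wedge>) d t \<phi> b \<beta> c \<gamma>)
    = - ((-1) ^ b *\<^sub>R twisted_d (t * (form_weight a + form_weight b + form_weight c))
                       (twisted_d (t * form_weight a) \<alpha> \<wedge> \<beta> \<wedge> \<gamma>))"
proof -
  define s where "s = t * (form_weight a + form_weight b + form_weight c)"
  define D\<alpha> where "D\<alpha> = twisted_d (t * form_weight a) \<alpha>"
  have "twisted_d s (\<alpha> \<wedge> \<beta> \<wedge> \<gamma>)
      = D\<alpha> \<wedge> \<beta> \<wedge> \<gamma> + (-1) ^ a *\<^sub>R (\<alpha> \<wedge> twisted_d (t * (form_weight b + form_weight c)) (\<beta> \<wedge> \<gamma>))"
    using twisted_d_wedge[OF \<alpha>] unfolding s_def D\<alpha>_def by (metis distrib_left add.assoc)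
  then have leibniz: "\<alpha> \<wedge> twisted_d (t * (form_weight b + form_weight c)) (\<beta> \<wedge> \<gamma>)
      = (-1) ^ a *\<^sub>R (twisted_d s (\<alpha> \<wedge> \<beta> \<wedge> \<gamma>) - D\<alpha> \<wedge> \<beta> \<wedge> \<gamma>)"
    by simp
  have "bracket (\<wedge>) d t \<phi> a \<alpha> (b + c + 1) (bracket (\<wedge>) d t \<phi> b \<beta> c \<gamma>)
      = ((-1) ^ a * (-1) ^ b) *\<^sub>R
          twisted_d s (\<alpha> \<wedge> twisted_d (t * (form_weight b + form_weight c)) (\<beta> \<wedge> \<gamma>))"
    unfolding bracket_eq_twisted_d[OF \<beta>] bracket_eq_twisted_d[OF \<alpha>] form_weight_bracket_degree s_def
    by (simp add: algebra_simps)
  also have "\<dots> = - ((-1) ^ b *\<^sub>R twisted_d s (D\<alpha> \<wedge> \<beta> \<wedge> \<gamma>))"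
    unfolding leibniz by simp
  finally show ?thesis
    unfolding s_def D\<alpha>_def .
qed

lemma bracket_bracket_left:
  assumes \<alpha>: "\<alpha> \<in> \<Omega> a" and \<beta>: "\<beta> \<in> \<Omega> b"
  shows "bracket (\<wedge>) d t \<phi> (a + b + 1) (bracket (\<wedge>) d t \<phi> a \<alpha> b \<beta>) c \<gamma>
    = (-1) ^ a *\<^sub>R twisted_d (t * (form_weight a + form_weight b + form_weight c))
                    (\<alpha> \<wedge> \<beta> \<wedge> twisted_d (t * form_weight c) \<gamma>)"
proof -
  define s where "s = t * (form_weight a + form_weight b + form_weight c)"
  define D\<gamma> where "D\<gamma> = twisted_d (t * form_weight c) \<gamma>"
  have \<alpha>\<beta>: "\<alpha> \<wedge> \<beta> \<in> \<Omega> (a + b)"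
    using wedge_in[OF \<alpha> \<beta>] .
  have "twisted_d s ((\<alpha> \<wedge> \<beta>) \<wedge> \<gamma>)
      = twisted_d (t * (form_weight a + form_weight b)) (\<alpha> \<wedge> \<beta>) \<wedge> \<gamma> + (-1) ^ (a + b) *\<^sub>R ((\<alpha> \<wedge> \<beta>) \<wedge> D\<gamma>)"
    using twisted_d_wedge[OF \<alpha>\<beta>] unfolding s_def D\<gamma>_def by (metis distrib_left)
  then have leibniz: "twisted_d (t * (form_weight a + form_weight b)) (\<alpha> \<wedge> \<beta>) \<wedge> \<gamma>
      = twisted_d s (\<alpha> \<wedge> \<beta> \<wedge> \<gamma>) - (-1) ^ (a + b) *\<^sub>R (\<alpha> \<wedge> \<beta> \<wedge> D\<gamma>)"
    by (simp add: algebra_simps)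
  have "bracket (\<wedge>) d t \<phi> (a + b + 1) (bracket (\<wedge>) d t \<phi> a \<alpha> b \<beta>) c \<gamma>
      = ((-1) ^ (a + b + 1) * (-1) ^ a) *\<^sub>R
          twisted_d s (twisted_d (t * (form_weight a + form_weight b)) (\<alpha> \<wedge> \<beta>) \<wedge> \<gamma>)"
    unfolding bracket_eq_twisted_d[OF bracket_in[OF \<alpha> \<beta>]]
    unfolding bracket_eq_twisted_d[OF \<alpha>] form_weight_bracket_degree s_def
    by simp
  also have "\<dots> = (-1) ^ a *\<^sub>R twisted_d s (\<alpha> \<wedge> \<beta> \<wedge> D\<gamma>)"
    unfolding leibniz by (simp add: power_add)
  finally show ?thesis
    unfolding s_def D\<gamma>_def .
qed

lemma bracket_super_jacobi:
  assumes \<alpha>: "\<alpha> \<in> \<Omega> a" and \<beta>: "\<beta> \<in> \<Omega> b" and \<gamma>: "\<gamma> \<in> \<Omega> c"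
  shows "bracket (\<wedge>) d t \<phi> a \<alpha> (b + c + 1) (bracket (\<wedge>) d t \<phi> b \<beta> c \<gamma>)
    = bracket (\<wedge>) d t \<phi> (a + b + 1) (bracket (\<wedge>) d t \<phi> a \<alpha> b \<beta>) c \<gamma>
      + (-1) ^ ((a + 1) * (b + 1)) *\<^sub>R
          bracket (\<wedge>) d t \<phi> b \<beta> (a + c + 1) (bracket (\<wedge>) d t \<phi> a \<alpha> c \<gamma>)"
proof -
  define s where "s = t * (form_weight a + form_weight b + form_weight c)"
  define D\<alpha> where "D\<alpha> = twisted_d (t * form_weight a) \<alpha>"
  define D\<beta> where "D\<beta> = twisted_d (t * form_weight b) \<beta>"
  define D\<gamma> where "D\<gamma> = twisted_d (t * form_weight c) \<gamma>"
  have "twisted_d s (\<alpha> \<wedge> \<beta> \<wedge> \<gamma>)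
      = D\<alpha> \<wedge> \<beta> \<wedge> \<gamma> + (-1) ^ a *\<^sub>R (\<alpha> \<wedge> D\<beta> \<wedge> \<gamma>) + (-1) ^ (a + b) *\<^sub>R (\<alpha> \<wedge> \<beta> \<wedge> D\<gamma>)"
    using twisted_d_wedge[OF \<alpha>, of "t * form_weight a" "t * form_weight b + t * form_weight c"]
      twisted_d_wedge[OF \<beta>, of "t * form_weight b" "t * form_weight c"]
    by (simp add: s_def D\<alpha>_def D\<beta>_def D\<gamma>_def distrib_left add.assoc power_add scaleR_add_right)
  from arg_cong[OF this, of "twisted_d s"]
  have D\<alpha>_term: "twisted_d s (D\<alpha> \<wedge> \<beta> \<wedge> \<gamma>)
      = - ((-1) ^ a *\<^sub>R twisted_d s (\<alpha> \<wedge> D\<beta> \<wedge> \<gamma>)) - (-1) ^ (a + b) *\<^sub>R twisted_d s (\<alpha> \<wedge> \<beta> \<wedge> D\<gamma>)"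
    by (simp add: algebra_simps eq_neg_iff_add_eq_0)
  have D\<beta>_swap: "D\<beta> \<wedge> \<alpha> \<wedge> \<gamma> = (-1) ^ (a * Suc b) *\<^sub>R (\<alpha> \<wedge> D\<beta> \<wedge> \<gamma>)"
    using wedge_left_commute[OF \<alpha> twisted_d_in[OF \<beta>]] unfolding D\<beta>_def .
  have "t * (form_weight b + form_weight a + form_weight c) = s"
    by (simp add: s_def algebra_simps)
  then have "bracket (\<wedge>) d t \<phi> b \<beta> (a + c + 1) (bracket (\<wedge>) d t \<phi> a \<alpha> c \<gamma>)
      = - ((-1) ^ (a * b) *\<^sub>R twisted_d s (\<alpha> \<wedge> D\<beta> \<wedge> \<gamma>))"
    unfolding bracket_bracket_right[OF \<beta> \<alpha>] D\<beta>_def[symmetric] D\<beta>_swap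
    by (simp add: power_add mult.commute)
  moreover have "bracket (\<wedge>) d t \<phi> a \<alpha> (b + c + 1) (bracket (\<wedge>) d t \<phi> b \<beta> c \<gamma>)
      = - ((-1) ^ b *\<^sub>R twisted_d s (D\<alpha> \<wedge> \<beta> \<wedge> \<gamma>))"
    unfolding bracket_bracket_right[OF \<alpha> \<beta>] s_def D\<alpha>_def ..
  moreover have "bracket (\<wedge>) d t \<phi> (a + b + 1) (bracket (\<wedge>) d t \<phi> a \<alpha> b \<beta>) c \<gamma>
      = (-1) ^ a *\<^sub>R twisted_d s (\<alpha> \<wedge> \<beta> \<wedge> D\<gamma>)"
    unfolding bracket_bracket_left[OF \<alpha> \<beta>] s_def D\<gamma>_def ..
  moreover have "(-1::real) ^ b * (-1) ^ a = - ((-1) ^ ((a + 1) * (b + 1)) * (-1) ^ (a * b))"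
    by (cases "even a"; cases "even b") simp_all
  ultimately show ?thesis
    unfolding D\<alpha>_term by (simp add: algebra_simps power_add)
qed

end

theorem mainTheorem4:
  fixes \<Omega> :: "nat \<Rightarrow> 'a::real_vector set"
    and wedge :: "'a \<Rightarrow> 'a \<Rightarrow> 'a" and d :: "'a \<Rightarrow> 'a"
    and n :: nat and t :: real and f \<phi> \<alpha> \<beta> \<gamma> :: 'a and a b c :: nat
  assumes forms: "diff_forms \<Omega> wedge d n"
    and exact: "f \<in> \<Omega> 0" "\<phi> = d f"
    and homog: "\<alpha> \<in> \<Omega> a" "\<beta> \<in> \<Omega> b" "\<gamma> \<in> \<Omega> c"
  shows "bracket wedge d t \<phi> a \<alpha> b \<beta> \<in> \<Omega> (a + b + 1)
    \<and> bracket wedge d t \<phi> a \<alpha> b \<beta>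
           = - ((-1::real) ^ ((a + 1) * (b + 1)) *\<^sub>R bracket wedge d t \<phi> b \<beta> a \<alpha>)
    \<and> bracket wedge d t \<phi> a \<alpha> (b + c + 1) (bracket wedge d t \<phi> b \<beta> c \<gamma>)
           = bracket wedge d t \<phi> (a + b + 1) (bracket wedge d t \<phi> a \<alpha> b \<beta>) c \<gamma>
             + (-1::real) ^ ((a + 1) * (b + 1)) *\<^sub>R
                 bracket wedge d t \<phi> b \<beta> (a + c + 1) (bracket wedge d t \<phi> a \<alpha> c \<gamma>)"
proof -
  interpret diff_forms_algebra \<Omega> wedge d n
    using forms by unfold_locales
  interpret closed_one_form \<Omega> wedge d n \<phi>
  proof
    show "\<phi> \<in> \<Omega> 1"
      using d_in[OF exact(1)] exact(2) by simp
    show "d \<phi> = 0"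
      using exact(2) by simp
  qed
  show ?thesis
    using bracket_in bracket_super_symmetric bracket_super_jacobi homog by blast
qed

end
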